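(* Let $q$, $\phi,\theta$, $U_1$ and $a^*,b^*$ be as in the context, and for $\lambda\in(0,\infty)$ let $\xi(\lambda)=-\frac{b^*}{2a^*}+\frac{i}{a^*}$ and $\psi(x,\lambda)=\theta(x,\lambda)-\xi(\lambda)\phi(x,\lambda)$. Then for every $x_0>0$ and every $\lambda\in(0,\infty)$, \[\lim_{N\to\infty}\frac{\int_{x_0}^N\psi(x,\lambda)^2\,dx}{\int_{x_0}^N|\psi(x,\lambda)|^2\,dx}=0.\]
   Context: $-y''+qy=\lambda y$ on $(0,\infty)$, $q(x)=\frac{q_0}{x^2}+\frac{q_1}{x}+\sum_{n\ge0}q_{n+2}x^n$ with real coefficients, series convergent on $(0,\infty)$, $q_0\ge-\tfrac14$, $q_0,q_1$ not both zero, $q\to0$ at $\infty$, and for some $x_0>0$ either $q\in L_1(x_0,\infty)$ or ($q'\in L_1(x_0,\infty)$, $q\in AC_{loc}[x_0,\infty)$). $\phi,\theta$: with $q_0=\nu^2-\frac14$, $\nu\ge0$, $\phi=x^{1/2+\nu}(1+\sum_{n\ge1}a_n(\lambda)x^n)$ is the Frobenius solution at $0$ for the larger indicial root, $y_2$ a second (possibly logarithmic) Frobenius solution with leading coefficient $1$ and coefficients real polynomials in $\lambda$, $C=W(\phi,y_2)\ne0$ real, $\theta=y_2/C$, so $W(\phi,\theta)=1$. Appell system: $(P,Q,R)'=M(P,Q,R)^T$, $M=\begin{pmatrix}0&\lambda-q&0\\-2&0&2(\lambda-q)\\0&-1&0\end{pmatrix}$; $U_1$ is its unique solution with $\lim_{x\to\infty}U_1=(\sqrt\lambda,0,1/\sqrt\lambda)^T$,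 and $a^*,b^*,c^*$ are the real coefficients with $U_1=a^*((\theta')^2,-2\theta\theta',\theta^2)^T+b^*(\theta'\phi',-(\theta\phi'+\theta'\phi),\theta\phi)^T+c^*((\phi')^2,-2\phi\phi',\phi^2)^T$ (one has $a^*>0$). *)

theory Defs
  imports "HOL-Analysis.Analysis"
begin

text \<open>Frobenius exponent: q0 = nu^2 - 1/4 with nu >= 0.\<close>
definition frob_nu :: "real \<Rightarrow> real" where
  "frob_nu q0 = sqrt (q0 + 1/4)"

definition series_potential :: "real \<Rightarrow> real \<Rightarrow> (nat \<Rightarrow> real) \<Rightarrow> real \<Rightarrow> real" where
  "series_potential q0 q1 qs x = q0 / x\<^sup>2 + q1 / x + (\<Sum>n. qs n * x ^ n)"

end

theory Submission
  imports Defs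
begin

text \<open>With \<psi> = \<theta> - \<xi>\<phi> and \<psi>' = \<theta>' - \<xi>\<phi>', the Appell invariant PR - Q^2/4 is constant,
  equal to 1 by the limits at infinity, and equal to (ac - b^2/4) W(\<phi>,\<theta>)^2 where
  (a,b,c) = (a*,b*,c*). Hence ac - b^2/4 = 1, and this normalisation gives R = a|\<psi>|^2,
  P = a|\<psi>'|^2 and Q = -2a Re(cnj \<psi> \<psi>'): so |\<psi>|^2 and |\<psi>'|^2 have positive limits in the ratio
  1 : \<lambda>, and Re(cnj \<psi> \<psi>') \<rightarrow> 0. Now (\<psi>\<psi>')' = e - 2\<lambda>\<psi>^2 with e = \<psi>'^2 + (q+\<lambda>)\<psi>^2, and the
  identity |\<psi>|^2 e = ((q+\<lambda>)|\<psi>|^2 - |\<psi>'|^2) \<psi>^2 + 2 Re(cnj \<psi> \<psi>') \<psi>\<psi>' forces e \<rightarrow> 0. Since \<psi>\<psi>'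
  stays bounded, averaging gives \<integral>\<psi>^2 = o(N), whereas \<integral>|\<psi>|^2 grows linearly.\<close>

lemma tendsto_div_at_top_of_derivative:
  fixes F F' :: "real \<Rightarrow> real"
  assumes "\<forall>\<^sub>F x in at_top. (F has_real_derivative F' x) (at x)" "(F' \<longlongrightarrow> L) at_top"
  shows "((\<lambda>N. F N / N) \<longlongrightarrow> L) at_top"
proof (rule lhospital_at_top_at_top[where g'="\<lambda>_. 1" and f'=F'])
  show "\<forall>\<^sub>F x in at_top. ((\<lambda>x. x) has_real_derivative 1) (at x)"
    by (auto intro!: derivative_eq_intros)
qed (use assms filterlim_ident in simp_all)

lemma tendsto_div_at_top_of_vector_derivative:
  fixes F F' :: "real \<Rightarrow> complex"
  assumes "\<forall>\<^sub>F x in at_top. (F has_vector_derivative F' x) (at x)" "(F' \<longlongrightarrow> L) at_top"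
  shows "((\<lambda>N. F N / of_real N) \<longlongrightarrow> L) at_top"
proof -
  have "((\<lambda>N. Re (F N) / N) \<longlongrightarrow> Re L) at_top" "((\<lambda>N. Im (F N) / N) \<longlongrightarrow> Im L) at_top"
    using assms by (auto intro!: tendsto_div_at_top_of_derivative tendsto_intros
        elim!: eventually_mono simp: has_vector_derivative_complex_iff)
  then show ?thesis
    by (simp add: tendsto_complex_iff Re_divide_of_real Im_divide_of_real)
qed

lemma has_vector_derivative_integral_upper:
  fixes f :: "real \<Rightarrow> 'a::banach"
  assumes "continuous_on {a..} f" "a < x"
  shows "((\<lambda>t. integral {a..t} f) has_vector_derivative f x) (at x)"
proof -
  have "continuous_on {a..x+1} f" using assms(1) by (rule continuous_on_subset) auto
  then have "((\<lambda>t. integral {a..t} f) has_vector_derivative f x) (at x within {a..x+1})"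
    by (rule integral_has_vector_derivative) (use assms in auto)
  moreover have "at x within {a..x+1} = at x" using assms by (intro at_within_Icc_at) auto
  ultimately show ?thesis by simp
qed

lemma tendsto_average_integral:
  fixes f :: "real \<Rightarrow> real"
  assumes "continuous_on {a..} f" "(f \<longlongrightarrow> L) at_top"
  shows "((\<lambda>N. integral {a..N} f / N) \<longlongrightarrow> L) at_top"
proof (rule tendsto_div_at_top_of_derivative[OF _ assms(2)])
  show "\<forall>\<^sub>F x in at_top. ((\<lambda>N. integral {a..N} f) has_real_derivative f x) (at x)"
    unfolding has_real_derivative_iff_has_vector_derivative
    by (rule eventually_mono[OF eventually_gt_at_top[of a] has_vector_derivative_integral_upper[OF assms(1)]])
qed

lemma tendsto_average_integral_zero:
  fixes f h e :: "real \<Rightarrow> complex"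
  assumes f: "continuous_on {a..} f" and c: "c \<noteq> 0"
    and h: "\<And>x. x > a \<Longrightarrow> (h has_vector_derivative e x - c * f x) (at x)"
    and e: "(e \<longlongrightarrow> 0) at_top" and h_avg: "((\<lambda>N. h N / of_real N) \<longlongrightarrow> 0) at_top"
  shows "((\<lambda>N. integral {a..N} f / of_real N) \<longlongrightarrow> 0) at_top"
proof -
  define H where "H N = h N + c * integral {a..N} f" for N
  have "(H has_vector_derivative e x) (at x)" if "x > a" for x
    using has_vector_derivative_add[OF h[OF that] has_vector_derivative_mult_right
        [OF has_vector_derivative_integral_upper[OF f that], of c]]
    by (simp add: H_def[abs_def])
  then have "((\<lambda>N. H N / of_real N) \<longlongrightarrow> 0) at_top"
    by (intro tendsto_div_at_top_of_vector_derivative[OF _ e]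
        eventually_mono[OF eventually_gt_at_top[of a]])
  then have "((\<lambda>N. (H N / of_real N - h N / of_real N) / c) \<longlongrightarrow> (0 - 0) / c) at_top"
    using c by (intro tendsto_intros h_avg)
  moreover have "(H N / of_real N - h N / of_real N) / c = integral {a..N} f / of_real N" for N
    using c by (simp add: H_def diff_divide_distrib[symmetric])
  ultimately show ?thesis by simp
qed

lemma Appell_invariant_eq_limit:
  fixes P Q R k :: "real \<Rightarrow> real"
  assumes P: "\<And>x. x > 0 \<Longrightarrow> (P has_real_derivative k x * Q x) (at x)"
    and Q: "\<And>x. x > 0 \<Longrightarrow> (Q has_real_derivative -2 * P x + 2 * k x * R x) (at x)"
    and R: "\<And>x. x > 0 \<Longrightarrow> (R has_real_derivative - Q x) (at x)"
    and P_lim: "(P \<longlongrightarrow> p) at_top" and Q_lim: "(Q \<longlongrightarrow> q) at_top"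
    and R_lim: "(R \<longlongrightarrow> r) at_top" and x: "x > 0"
  shows "P x * R x - (Q x)\<^sup>2 / 4 = p * r - q\<^sup>2 / 4"
proof -
  define G where "G x = P x * R x - (Q x)\<^sup>2 / 4" for x
  have "(G has_real_derivative 0) (at y)" if "y > 0" for y
    unfolding G_def[abs_def]
    by (rule derivative_eq_intros P[OF that] Q[OF that] R[OF that] refl | simp add: field_simps)+
  then obtain K where K: "\<And>y. y > 0 \<Longrightarrow> G y = K"
    using has_field_derivative_zero_constant[of "{0<..}" G]
    by (metis convex_real_interval(3) greaterThan_iff has_field_derivative_at_within)
  have "(G \<longlongrightarrow> p * r - q\<^sup>2 / 4) at_top"
    unfolding G_def[abs_def] by (intro tendsto_intros P_lim Q_lim R_lim) auto
  moreover have "(G \<longlongrightarrow> K) at_top"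
    by (rule tendsto_eventually, rule eventually_mono[OF eventually_gt_at_top[of 0]]) (rule K)
  ultimately have "K = p * r - q\<^sup>2 / 4"
    using tendsto_unique[OF trivial_limit_at_top_linorder] by blast
  with K[OF x] show ?thesis by (simp add: G_def)
qed

text \<open>For a quadratic form in two solutions, the Appell invariant is the discriminant of the
  form times the squared Wronskian.\<close>
lemma Appell_combination_invariant:
  fixes a b c t p dt dp :: real
  shows "(a * dt\<^sup>2 + b * (dt * dp) + c * dp\<^sup>2) * (a * t\<^sup>2 + b * (t * p) + c * p\<^sup>2)
    - (a * (-2 * t * dt) + b * (- (t * dp + dt * p)) + c * (-2 * p * dp))\<^sup>2 / 4
    = (a * c - b\<^sup>2 / 4) * (p * dt - dp * t)\<^sup>2"
  by (simp add: power2_eq_square field_simps)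

lemma
  fixes a b c t p s r :: real
  assumes "a * c - b\<^sup>2 / 4 = 1"
  defines "\<xi> \<equiv> complex_of_real (- b / (2 * a)) + \<i> / complex_of_real a"
  shows quadratic_form_eq_cmod_square:
      "a * t\<^sup>2 + b * (t * p) + c * p\<^sup>2 = a * (cmod (of_real t - \<xi> * of_real p))\<^sup>2"
    and polar_form_eq_Re_cnj:
      "a * (t * s) + b * (t * r + s * p) / 2 + c * (p * r)
        = a * Re (cnj (of_real t - \<xi> * of_real p) * (of_real s - \<xi> * of_real r))"
proof -
  have a: "a \<noteq> 0" using assms(1) by (auto simp: power2_eq_square) (smt (verit) zero_le_square)
  have c: "c = (1 + b\<^sup>2 / 4) / a" using assms(1) a by (simp add: field_simps)
  show "a * t\<^sup>2 + b * (t * p) + c * p\<^sup>2 = a * (cmod (of_real t - \<xi> * of_real p))\<^sup>2"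
    using a unfolding c \<xi>_def cmod_power2 by (simp add: power2_eq_square field_simps)
  show "a * (t * s) + b * (t * r + s * p) / 2 + c * (p * r)
        = a * Re (cnj (of_real t - \<xi> * of_real p) * (of_real s - \<xi> * of_real r))"
    using a unfolding c \<xi>_def by (simp add: power2_eq_square field_simps)
qed

lemma norm_square_defect_le:
  fixes z z' :: complex and s :: real
  assumes "z \<noteq> 0"
  shows "cmod (z'\<^sup>2 + of_real s * z\<^sup>2)
    \<le> \<bar>s * (cmod z)\<^sup>2 - (cmod z')\<^sup>2\<bar>
      + \<bar>Re (cnj z * z')\<bar> * ((cmod z)\<^sup>2 + (cmod z')\<^sup>2) / (cmod z)\<^sup>2"
proof -
  have identity: "of_real ((cmod z)\<^sup>2) * (z'\<^sup>2 + of_real s * z\<^sup>2)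
      = of_real (s * (cmod z)\<^sup>2 - (cmod z')\<^sup>2) * z\<^sup>2 + of_real (2 * Re (cnj z * z')) * (z * z')"
  proof -
    have "of_real (2 * Re (cnj z * z')) = cnj z * z' + z * cnj z'"
      using complex_add_cnj[of "cnj z * z'"] by simp
    then show ?thesis
      unfolding of_real_diff of_real_mult complex_norm_square
      by (simp add: power2_eq_square algebra_simps)
  qed
  have "(cmod z)\<^sup>2 * cmod (z'\<^sup>2 + of_real s * z\<^sup>2)
      = cmod (of_real (s * (cmod z)\<^sup>2 - (cmod z')\<^sup>2) * z\<^sup>2
          + of_real (2 * Re (cnj z * z')) * (z * z'))"
    by (subst identity[symmetric]) (simp add: norm_mult norm_power)
  also have "\<dots> \<le> \<bar>s * (cmod z)\<^sup>2 - (cmod z')\<^sup>2\<bar> * (cmod z)\<^sup>2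
      + \<bar>Re (cnj z * z')\<bar> * (2 * cmod z * cmod z')"
    by (rule order_trans[OF norm_triangle_ineq],
        simp only: norm_mult norm_power norm_of_real abs_mult)
  also have "\<dots> \<le> \<bar>s * (cmod z)\<^sup>2 - (cmod z')\<^sup>2\<bar> * (cmod z)\<^sup>2
      + \<bar>Re (cnj z * z')\<bar> * ((cmod z)\<^sup>2 + (cmod z')\<^sup>2)"
    by (intro add_left_mono mult_left_mono sum_squares_bound) simp
  finally show ?thesis using assms by (simp add: field_simps)
qed

lemma tendsto_average_integral_square_zero:
  fixes \<psi> \<psi>' :: "real \<Rightarrow> complex" and q :: "real \<Rightarrow> real" and lam \<rho> x0 :: real
  assumes lam: "lam \<noteq> 0" and \<rho>: "\<rho> > 0"
    and \<psi>: "\<And>x. x \<ge> x0 \<Longrightarrow> (\<psi> has_vector_derivative \<psi>' x) (at x)"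
    and \<psi>': "\<And>x. x \<ge> x0 \<Longrightarrow> (\<psi>' has_vector_derivative of_real (q x - lam) * \<psi> x) (at x)"
    and q: "(q \<longlongrightarrow> 0) at_top"
    and \<psi>_lim: "((\<lambda>x. (cmod (\<psi> x))\<^sup>2) \<longlongrightarrow> \<rho>) at_top"
    and \<psi>'_lim: "((\<lambda>x. (cmod (\<psi>' x))\<^sup>2) \<longlongrightarrow> lam * \<rho>) at_top"
    and cross_lim: "((\<lambda>x. Re (cnj (\<psi> x) * \<psi>' x)) \<longlongrightarrow> 0) at_top"
  shows "((\<lambda>N. integral {x0..N} (\<lambda>x. (\<psi> x)\<^sup>2) / of_real N) \<longlongrightarrow> 0) at_top"
proof (rule tendsto_average_integral_zero)
  show "continuous_on {x0..} (\<lambda>x. (\<psi> x)\<^sup>2)"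
    using \<psi> by (intro continuous_intros continuous_at_imp_continuous_on)
      (auto intro: has_vector_derivative_continuous)
  show "of_real (2 * lam) \<noteq> (0 :: complex)" using lam by simp
  show "((\<lambda>x. \<psi> x * \<psi>' x) has_vector_derivative
      ((\<psi>' x)\<^sup>2 + of_real (q x + lam) * (\<psi> x)\<^sup>2) - of_real (2 * lam) * (\<psi> x)\<^sup>2) (at x)"
    if "x > x0" for x
    using has_vector_derivative_mult[OF \<psi> \<psi>'] that
    by (simp add: power2_eq_square algebra_simps)
  let ?B = "\<lambda>x. \<bar>(q x + lam) * (cmod (\<psi> x))\<^sup>2 - (cmod (\<psi>' x))\<^sup>2\<bar>
    + \<bar>Re (cnj (\<psi> x) * \<psi>' x)\<bar> * ((cmod (\<psi> x))\<^sup>2 + (cmod (\<psi>' x))\<^sup>2) / (cmod (\<psi> x))\<^sup>2"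
  have "(?B \<longlongrightarrow> \<bar>(0 + lam) * \<rho> - lam * \<rho>\<bar> + \<bar>0\<bar> * (\<rho> + lam * \<rho>) / \<rho>) at_top"
    using \<rho> by (intro tendsto_intros q \<psi>_lim \<psi>'_lim cross_lim) auto
  then have B: "(?B \<longlongrightarrow> 0) at_top" by simp
  have nonzero: "\<forall>\<^sub>F x in at_top. \<psi> x \<noteq> 0"
    using order_tendstoD(1)[OF \<psi>_lim \<rho>] by (auto elim!: eventually_mono)
  show "((\<lambda>x. (\<psi>' x)\<^sup>2 + of_real (q x + lam) * (\<psi> x)\<^sup>2) \<longlongrightarrow> 0) at_top"
    by (intro Lim_null_comparison[OF _ B] eventually_mono[OF nonzero] norm_square_defect_le)
  have "((\<lambda>x. cmod (\<psi> x * \<psi>' x)) \<longlongrightarrow> sqrt \<rho> * sqrt (lam * \<rho>)) at_top"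
    using tendsto_real_sqrt[OF \<psi>_lim] tendsto_real_sqrt[OF \<psi>'_lim]
    by (simp add: norm_mult tendsto_mult)
  then have "((\<lambda>N. cmod (\<psi> N * \<psi>' N) / N) \<longlongrightarrow> 0) at_top"
    by (rule tendsto_divide_0[OF _ filterlim_at_top_imp_at_infinity[OF filterlim_ident]])
  then show "((\<lambda>N. \<psi> N * \<psi>' N / of_real N) \<longlongrightarrow> 0) at_top"
    by (rule Lim_null_comparison[rotated])
      (auto intro!: eventually_mono[OF eventually_gt_at_top[of 0]] simp: norm_divide)
qed

lemma tendsto_integral_square_ratio_zero:
  fixes \<psi> \<psi>' :: "real \<Rightarrow> complex" and q :: "real \<Rightarrow> real" and lam \<rho> x0 :: real
  assumes lam: "lam \<noteq> 0" and \<rho>: "\<rho> > 0"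
    and \<psi>: "\<And>x. x \<ge> x0 \<Longrightarrow> (\<psi> has_vector_derivative \<psi>' x) (at x)"
    and \<psi>': "\<And>x. x \<ge> x0 \<Longrightarrow> (\<psi>' has_vector_derivative of_real (q x - lam) * \<psi> x) (at x)"
    and q: "(q \<longlongrightarrow> 0) at_top"
    and \<psi>_lim: "((\<lambda>x. (cmod (\<psi> x))\<^sup>2) \<longlongrightarrow> \<rho>) at_top"
    and \<psi>'_lim: "((\<lambda>x. (cmod (\<psi>' x))\<^sup>2) \<longlongrightarrow> lam * \<rho>) at_top"
    and cross_lim: "((\<lambda>x. Re (cnj (\<psi> x) * \<psi>' x)) \<longlongrightarrow> 0) at_top"
  shows "((\<lambda>N. integral {x0..N} (\<lambda>x. (\<psi> x)\<^sup>2)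
      / of_real (integral {x0..N} (\<lambda>x. (cmod (\<psi> x))\<^sup>2))) \<longlongrightarrow> 0) at_top"
proof -
  have "continuous_on {x0..} (\<lambda>x. (cmod (\<psi> x))\<^sup>2)"
    by (intro continuous_intros continuous_at_imp_continuous_on ballI
        has_vector_derivative_continuous[OF \<psi>]) auto
  then have denominator: "((\<lambda>N. integral {x0..N} (\<lambda>x. (cmod (\<psi> x))\<^sup>2) / N) \<longlongrightarrow> \<rho>) at_top"
    by (rule tendsto_average_integral[OF _ \<psi>_lim])
  have "((\<lambda>N. (integral {x0..N} (\<lambda>x. (\<psi> x)\<^sup>2) / of_real N)
      / of_real (integral {x0..N} (\<lambda>x. (cmod (\<psi> x))\<^sup>2) / N)) \<longlongrightarrow> 0) at_top"
    by (rule tendsto_eq_rhs[OF tendsto_divide[OF tendsto_average_integral_square_zero[OF assms]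
          tendsto_of_real[OF denominator]]]) (use \<rho> in simp_all)
  then show ?thesis
    by (rule Lim_transform_eventually, intro eventually_mono[OF eventually_gt_at_top[of 0]])
      (simp add: field_simps)
qed

lemma Appell_combination_limits:
  fixes P Q R t p dt dp :: "real \<Rightarrow> real" and a b c lam :: real
    and \<xi> :: complex and \<psi> \<psi>' :: "real \<Rightarrow> complex"
  assumes discr: "a * c - b\<^sup>2 / 4 = 1" and lam: "lam > 0"
    and P: "\<And>x. x > 0 \<Longrightarrow> P x = a * (dt x)\<^sup>2 + b * (dt x * dp x) + c * (dp x)\<^sup>2"
    and Q: "\<And>x. x > 0 \<Longrightarrow>
      Q x = a * (-2 * t x * dt x) + b * (- (t x * dp x + dt x * p x)) + c * (-2 * p x * dp x)"
    and R: "\<And>x. x > 0 \<Longrightarrow> R x = a * (t x)\<^sup>2 + b * (t x * p x) + c * (p x)\<^sup>2"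
    and P_lim: "(P \<longlongrightarrow> sqrt lam) at_top" and Q_lim: "(Q \<longlongrightarrow> 0) at_top"
    and R_lim: "(R \<longlongrightarrow> 1 / sqrt lam) at_top"
    and \<xi>: "\<xi> = complex_of_real (- b / (2 * a)) + \<i> / complex_of_real a"
    and \<psi>: "\<And>x. \<psi> x = of_real (t x) - \<xi> * of_real (p x)"
    and \<psi>': "\<And>x. \<psi>' x = of_real (dt x) - \<xi> * of_real (dp x)"
  shows "a > 0"
    and "((\<lambda>x. (cmod (\<psi> x))\<^sup>2) \<longlongrightarrow> 1 / (a * sqrt lam)) at_top"
    and "((\<lambda>x. (cmod (\<psi>' x))\<^sup>2) \<longlongrightarrow> lam * (1 / (a * sqrt lam))) at_top"
    and "((\<lambda>x. Re (cnj (\<psi> x) * \<psi>' x)) \<longlongrightarrow> 0) at_top"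
proof -
  have R_eq: "R x = a * (cmod (\<psi> x))\<^sup>2" if "x > 0" for x
    unfolding R[OF that] \<psi> \<xi> by (rule quadratic_form_eq_cmod_square[OF discr])
  have P_eq: "P x = a * (cmod (\<psi>' x))\<^sup>2" if "x > 0" for x
    unfolding P[OF that] \<psi>' \<xi> by (rule quadratic_form_eq_cmod_square[OF discr])
  have Q_eq: "Q x = -2 * a * Re (cnj (\<psi> x) * \<psi>' x)" if "x > 0" for x
  proof -
    have "Q x = -2 * (a * (t x * dt x) + b * (t x * dp x + dt x * p x) / 2 + c * (p x * dp x))"
      unfolding Q[OF that] by (simp add: algebra_simps)
    then show ?thesis unfolding polar_form_eq_Re_cnj[OF discr] \<psi> \<psi>' \<xi> by simp
  qed
  show a: "a > 0"
  proof -
    have "\<forall>\<^sub>F x in at_top. R x > 0"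
      using order_tendstoD(1)[OF R_lim] lam by simp
    then have "\<forall>\<^sub>F x in at_top. x > 0 \<and> R x > 0"
      using eventually_gt_at_top[of 0] by eventually_elim simp
    then obtain x where "x > 0" "R x > 0" by (auto simp: eventually_at_top_linorder)
    with R_eq show ?thesis by (auto simp: zero_less_mult_iff)
  qed
  have ev: "\<forall>\<^sub>F x in at_top. R x / a = (cmod (\<psi> x))\<^sup>2 \<and> P x / a = (cmod (\<psi>' x))\<^sup>2
      \<and> Q x / (-2 * a) = Re (cnj (\<psi> x) * \<psi>' x)"
    using eventually_gt_at_top[of 0] by eventually_elim (use a in \<open>simp add: R_eq P_eq Q_eq\<close>)
  have sqrt_lam: "sqrt lam / a = lam * (1 / (a * sqrt lam))"
    using lam by simp (metis divide_divide_eq_left less_imp_le mult.commute real_div_sqrt)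
  show "((\<lambda>x. (cmod (\<psi> x))\<^sup>2) \<longlongrightarrow> 1 / (a * sqrt lam)) at_top"
    by (rule Lim_transform_eventually[OF tendsto_eq_rhs[OF tendsto_divide[OF R_lim tendsto_const[of a]]]])
      (use a ev in \<open>auto elim: eventually_mono\<close>)
  show "((\<lambda>x. (cmod (\<psi>' x))\<^sup>2) \<longlongrightarrow> lam * (1 / (a * sqrt lam))) at_top"
    by (rule Lim_transform_eventually[OF tendsto_eq_rhs[OF tendsto_divide[OF P_lim tendsto_const[of a]]]])
      (use a ev sqrt_lam in \<open>auto elim: eventually_mono\<close>)
  show "((\<lambda>x. Re (cnj (\<psi> x) * \<psi>' x)) \<longlongrightarrow> 0) at_top"
    by (rule Lim_transform_eventually[OF tendsto_eq_rhs[OF tendsto_divide[OF Q_lim tendsto_const[of "-2 * a"]]]])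
      (use a ev in \<open>auto elim: eventually_mono\<close>)
qed

lemma has_vector_derivative_complex_combination:
  fixes y z dy dz :: "real \<Rightarrow> real" and \<xi> :: complex
  assumes "(dy has_real_derivative k * y x) (at x)" "(dz has_real_derivative k * z x) (at x)"
  shows "((\<lambda>x. of_real (dy x) - \<xi> * of_real (dz x)) has_vector_derivative
      of_real k * (of_real (y x) - \<xi> * of_real (z x))) (at x)"
proof -
  have "((\<lambda>x. of_real (dy x) - \<xi> * of_real (dz x)) has_vector_derivative
      of_real (k * y x) - \<xi> * of_real (k * z x)) (at x)"
    by (intro has_vector_derivative_diff has_vector_derivative_mult_right
        has_vector_derivative_of_real assms)
  then show ?thesis by (rule has_vector_derivative_eq_rhs) (simp add: algebra_simps)
qed

theorem mainTheorem10:
  fixes q0 q1 :: real and qs :: "nat \<Rightarrow> real" and q :: "real \<Rightarrow> real"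
    and lam :: real
    and phi dphi theta dtheta :: "real \<Rightarrow> real"
    and a :: "nat \<Rightarrow> real" and y2 :: "real \<Rightarrow> real" and b :: "nat \<Rightarrow> real"
    and b0 cl C :: real
    and P Q R :: "real \<Rightarrow> real" and as bs cs :: real
    and x0 :: real
  assumes q_def: "q = series_potential q0 q1 qs"
    and q_conv: "\<And>x. x > 0 \<Longrightarrow> summable (\<lambda>n. qs n * x ^ n)"
    and q0_ge: "q0 \<ge> -1/4"
    and q01: "q0 \<noteq> 0 \<or> q1 \<noteq> 0"
    and q_lim: "(q \<longlongrightarrow> 0) at_top"
    and q_int: "\<exists>x1>0. q absolutely_integrable_on {x1..}
                  \<or> (deriv q) absolutely_integrable_on {x1..}"
    and lam_pos: "lam > 0"
    \<comment> \<open>phi: Frobenius solution for the larger indicial root 1/2 + nu\<close>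
    and phi_ser: "\<And>x. x > 0 \<Longrightarrow> summable (\<lambda>n. a (Suc n) * x ^ Suc n)"
    and phi_form: "\<And>x. x > 0 \<Longrightarrow>
        phi x = x powr (1/2 + frob_nu q0) * (1 + (\<Sum>n. a (Suc n) * x ^ Suc n))"
    and phi_d: "\<And>x. x > 0 \<Longrightarrow> (phi has_real_derivative dphi x) (at x)"
    and phi_dd: "\<And>x. x > 0 \<Longrightarrow> (dphi has_real_derivative (q x - lam) * phi x) (at x)"
    \<comment> \<open>y2: second (possibly logarithmic) Frobenius solution, leading coefficient 1\<close>
    and y2_ser: "\<And>x. x > 0 \<Longrightarrow> summable (\<lambda>n. b (Suc n) * x ^ Suc n)"
    and y2_form: "\<And>x. x > 0 \<Longrightarrow>
        y2 x = x powr (1/2 - frob_nu q0) * (b0 + (\<Sum>n. b (Suc n) * x ^ Suc n))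
               + cl * phi x * ln x"
    and y2_lead: "(frob_nu q0 > 0 \<longrightarrow> b0 = 1) \<and> (frob_nu q0 = 0 \<longrightarrow> cl = 1)"
    and y2_sol: "\<And>x. x > 0 \<Longrightarrow> (y2 has_real_derivative C * dtheta x) (at x)"
    and C_nz: "C \<noteq> 0"
    and C_wr: "\<And>x. x > 0 \<Longrightarrow> phi x * (C * dtheta x) - dphi x * y2 x = C"
    and theta_def: "\<And>x. x > 0 \<Longrightarrow> theta x = y2 x / C"
    and theta_d: "\<And>x. x > 0 \<Longrightarrow> (theta has_real_derivative dtheta x) (at x)"
    and theta_dd: "\<And>x. x > 0 \<Longrightarrow> (dtheta has_real_derivative (q x - lam) * theta x) (at x)"
    \<comment> \<open>U_1 = (P,Q,R): solution of the Appell system with the prescribed limit at infinity\<close>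
    and P_d: "\<And>x. x > 0 \<Longrightarrow> (P has_real_derivative (lam - q x) * Q x) (at x)"
    and Q_d: "\<And>x. x > 0 \<Longrightarrow>
        (Q has_real_derivative (-2 * P x + 2 * (lam - q x) * R x)) (at x)"
    and R_d: "\<And>x. x > 0 \<Longrightarrow> (R has_real_derivative - Q x) (at x)"
    and P_lim: "(P \<longlongrightarrow> sqrt lam) at_top"
    and Q_lim: "(Q \<longlongrightarrow> 0) at_top"
    and R_lim: "(R \<longlongrightarrow> 1 / sqrt lam) at_top"
    and P_comb: "\<And>x. x > 0 \<Longrightarrow>
        P x = as * (dtheta x)\<^sup>2 + bs * (dtheta x * dphi x) + cs * (dphi x)\<^sup>2"
    and Q_comb: "\<And>x. x > 0 \<Longrightarrow>
        Q x = as * (-2 * theta x * dtheta x)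
              + bs * (- (theta x * dphi x + dtheta x * phi x))
              + cs * (-2 * phi x * dphi x)"
    and R_comb: "\<And>x. x > 0 \<Longrightarrow>
        R x = as * (theta x)\<^sup>2 + bs * (theta x * phi x) + cs * (phi x)\<^sup>2"
    and x0_pos: "x0 > 0"
  shows "let xi = complex_of_real (- bs / (2 * as)) + \<i> / complex_of_real as;
             psi = (\<lambda>x. complex_of_real (theta x) - xi * complex_of_real (phi x))
         in ((\<lambda>N. integral {x0..N} (\<lambda>x. (psi x)\<^sup>2)
                   / complex_of_real (integral {x0..N} (\<lambda>x. (cmod (psi x))\<^sup>2)))
             \<longlongrightarrow> 0) at_top"
proof -
  define \<xi> where "\<xi> = complex_of_real (- bs / (2 * as)) + \<i> / complex_of_real as"
  define \<psi> where "\<psi> x = of_real (theta x) - \<xi> * of_real (phi x)" for x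
  define \<psi>' where "\<psi>' x = of_real (dtheta x) - \<xi> * of_real (dphi x)" for x
  have wronskian: "phi x * dtheta x - dphi x * theta x = 1" if "x > 0" for x
    using C_wr[OF that] C_nz unfolding theta_def[OF that] by (simp add: field_simps)
  have "P 1 * R 1 - (Q 1)\<^sup>2 / 4 = sqrt lam * (1 / sqrt lam) - 0\<^sup>2 / 4"
    by (rule Appell_invariant_eq_limit[OF P_d Q_d R_d P_lim Q_lim R_lim]) simp_all
  then have discr: "as * cs - bs\<^sup>2 / 4 = 1"
    using Appell_combination_invariant[of as "dtheta 1" bs "dphi 1" cs "theta 1" "phi 1"]
      wronskian[of 1] P_comb[of 1] Q_comb[of 1] R_comb[of 1] lam_pos by simp
  note limits = Appell_combination_limits[OF discr lam_pos P_comb Q_comb R_comb P_lim Q_lim R_lim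
      \<xi>_def \<psi>_def \<psi>'_def]
  have "((\<lambda>N. integral {x0..N} (\<lambda>x. (\<psi> x)\<^sup>2)
      / of_real (integral {x0..N} (\<lambda>x. (cmod (\<psi> x))\<^sup>2))) \<longlongrightarrow> 0) at_top"
  proof (rule tendsto_integral_square_ratio_zero[OF _ _ _ _ q_lim limits(2-4)])
    show "lam \<noteq> 0" "1 / (as * sqrt lam) > 0" using lam_pos limits(1) by simp_all
    show "(\<psi> has_vector_derivative \<psi>' x) (at x)" if "x0 \<le> x" for x
      using x0_pos that unfolding \<psi>_def[abs_def] \<psi>'_def
      by (intro derivative_intros theta_d phi_d) simp_all
    show "(\<psi>' has_vector_derivative of_real (q x - lam) * \<psi> x) (at x)" if "x0 \<le> x" for x
      using x0_pos that unfolding \<psi>'_def[abs_def] \<psi>_def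
      by (intro has_vector_derivative_complex_combination theta_dd phi_dd) simp_all
  qed
  then show ?thesis unfolding Let_def \<xi>_def[symmetric] \<psi>_def by simp
qed

end
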